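(* Let $G$ be a bipartite TRVG with respect to the torus, with a rectangle representation on the torus in which the rectangles of one part are $g_1,\dots,g_p$ and the rectangles of the other part are $r_1,\dots,r_q$. If, for each $i\in\{1,\dots,p\}$, $g_i$ sees exactly $\alpha_i$ of the rectangles $r_1,\dots,r_q$ horizontally, then \[ q\ \ge\ \alpha_1+\alpha_2+\cdots+\alpha_p-p. \]
   Context: View the torus as an axis-parallel rectangle $[0,W]\times[0,H]$ with opposite sides identified; horizontal lines $y=c$ and vertical lines $x=c$ are closed curves on it. A graph $G$ is a TRVG with respect to the torus if its vertices can be represented by a collection of pairwise non-overlapping axis-parallel rectangles on this torus (possibly wrapping across the identified sides), one per vertex, such that two distinct vertices are adjacent if and only if some horizontal or vertical line of the torus intersects the interiors of both of their rectangles (other rectangles do not block visibility). Two rectangles see each other horizontally if some horizontal line of the torus meets the interiors of both. *)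

theory Defs
  imports Main "HOL.Real"
begin

text \<open>The torus is [0,W] x [0,H] with opposite sides identified; we work with
  periodic coordinates in the plane: a point (x,y) of the plane represents the torus
  point (x mod W, y mod H).  An axis-parallel rectangle on the torus is given by a
  lower-left corner (tx, ty) and side lengths tw, th with 0 < tw < W and 0 < th < H;
  it may wrap across the identified sides.\<close>

record trect =
  tx :: real
  ty :: real
  tw :: real
  th :: real

definition valid_trect :: "real \<Rightarrow> real \<Rightarrow> trect \<Rightarrow> bool" where
  "valid_trect W H R \<longleftrightarrow> 0 < tw R \<and> tw R < W \<and> 0 < th R \<and> th R < H"

definition in_open_arc :: "real \<Rightarrow> real \<Rightarrow> real \<Rightarrow> real \<Rightarrow> bool" where
  "in_open_arc L a l t \<longleftrightarrow> (\<exists>k::int. a < t + of_int k * L \<and> t + of_int k * L < a + l)"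

definition trect_interior :: "real \<Rightarrow> real \<Rightarrow> trect \<Rightarrow> (real \<times> real) set" where
  "trect_interior W H R =
     {(x, y). in_open_arc W (tx R) (tw R) x \<and> in_open_arc H (ty R) (th R) y}"

definition sees_horiz :: "real \<Rightarrow> real \<Rightarrow> trect \<Rightarrow> trect \<Rightarrow> bool" where
  "sees_horiz W H R1 R2 \<longleftrightarrow>
     (\<exists>c. (\<exists>x. (x, c) \<in> trect_interior W H R1) \<and> (\<exists>x. (x, c) \<in> trect_interior W H R2))"

definition sees_vert :: "real \<Rightarrow> real \<Rightarrow> trect \<Rightarrow> trect \<Rightarrow> bool" where
  "sees_vert W H R1 R2 \<longleftrightarrow>
     (\<exists>c. (\<exists>y. (c, y) \<in> trect_interior W H R1) \<and> (\<exists>y. (c, y) \<in> trect_interior W H R2))"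

definition trvg_rep :: "real \<Rightarrow> real \<Rightarrow> 'v set \<Rightarrow> ('v \<Rightarrow> 'v \<Rightarrow> bool) \<Rightarrow> ('v \<Rightarrow> trect) \<Rightarrow> bool" where
  "trvg_rep W H V E rep \<longleftrightarrow>
     (\<forall>v\<in>V. valid_trect W H (rep v)) \<and>
     (\<forall>u\<in>V. \<forall>v\<in>V. u \<noteq> v \<longrightarrow> trect_interior W H (rep u) \<inter> trect_interior W H (rep v) = {}) \<and>
     (\<forall>u\<in>V. \<forall>v\<in>V. u \<noteq> v \<longrightarrow>
        (E u v \<longleftrightarrow> sees_horiz W H (rep u) (rep v) \<or> sees_vert W H (rep u) (rep v)))"

definition simple_graph :: "'v set \<Rightarrow> ('v \<Rightarrow> 'v \<Rightarrow> bool) \<Rightarrow> bool" where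
  "simple_graph V E \<longleftrightarrow> finite V \<and> (\<forall>u v. E u v \<longrightarrow> E v u) \<and> (\<forall>v. \<not> E v v) \<and>
     (\<forall>u v. E u v \<longrightarrow> u \<in> V \<and> v \<in> V)"

end

theory Submission
  imports Defs
begin

text \<open>Project every rectangle to its open arc of y-coordinates on the circle of length H.
  Rectangles of the same part see no rectangle of their own part, so the arcs of each part are
  pairwise disjoint.  Whenever two open arcs meet, one of them contains the upper endpoint of the
  other in its half-open closure (a, a + l].  Charge every pair (g_i, r_j) of meeting arcs to the
  upper endpoint of g_i if it lies in the arc of r_j, and to the upper endpoint of r_j otherwise.
  Disjointness means that the upper endpoint of g_i lies in at most one arc of r, and that of r_j
  in at most one arc of g, so there are at most p + q pairs.\<close>

definition in_halfopen_arc :: "real \<Rightarrow> real \<Rightarrow> real \<Rightarrow> real \<Rightarrow> bool" where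
  "in_halfopen_arc L a l t \<longleftrightarrow> (\<exists>k::int. a < t + of_int k * L \<and> t + of_int k * L \<le> a + l)"

definition arcs_meet :: "real \<Rightarrow> real \<Rightarrow> real \<Rightarrow> real \<Rightarrow> real \<Rightarrow> bool" where
  "arcs_meet L a l b m \<longleftrightarrow> (\<exists>t. in_open_arc L a l t \<and> in_open_arc L b m t)"

lemma arcs_meet_imp_endpoint_in_halfopen_arc:
  assumes "arcs_meet L a l b m"
  shows "in_halfopen_arc L b m (a + l) \<or> in_halfopen_arc L a l (b + m)"
proof -
  obtain t k k' where k: "a < t + of_int k * L" "t + of_int k * L < a + l"
    and k': "b < t + of_int k' * L" "t + of_int k' * L < b + m"
    using assms unfolding arcs_meet_def in_open_arc_def by blast
  have shift: "of_int (k' - k) * L = of_int k' * L - of_int k * L"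
    "of_int (k - k') * L = of_int k * L - of_int k' * L"
    by (simp_all add: left_diff_distrib)
  show ?thesis
  proof (cases "a + l - of_int k * L \<le> b + m - of_int k' * L")
    case True
    then have "b < a + l + of_int (k' - k) * L \<and> a + l + of_int (k' - k) * L \<le> b + m"
      unfolding shift using k k' by linarith
    then show ?thesis unfolding in_halfopen_arc_def by blast
  next
    case False
    then have "a < b + m + of_int (k - k') * L \<and> b + m + of_int (k - k') * L \<le> a + l"
      unfolding shift using k k' by linarith
    then show ?thesis unfolding in_halfopen_arc_def by blast
  qed
qed

text \<open>A point just below e lies in both open arcs.\<close>
lemma in_halfopen_arcs_imp_arcs_meet:
  assumes "in_halfopen_arc L a l e" "in_halfopen_arc L b m e"
  shows "arcs_meet L a l b m"
proof -
  obtain k :: int where k: "a < e + of_int k * L" "e + of_int k * L \<le> a + l"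
    using assms(1) unfolding in_halfopen_arc_def by blast
  obtain k' :: int where k': "b < e + of_int k' * L" "e + of_int k' * L \<le> b + m"
    using assms(2) unfolding in_halfopen_arc_def by blast
  define \<epsilon> where "\<epsilon> = min (e + of_int k * L - a) (e + of_int k' * L - b) / 2"
  have "0 < \<epsilon>" "\<epsilon> < e + of_int k * L - a" "\<epsilon> < e + of_int k' * L - b"
    using k k' unfolding \<epsilon>_def by auto
  then have "in_open_arc L a l (e - \<epsilon>)" "in_open_arc L b m (e - \<epsilon>)"
    unfolding in_open_arc_def using k k' by (intro exI[of _ k] exI[of _ k'], linarith)+
  then show ?thesis unfolding arcs_meet_def by blast
qed

lemma sees_horiz_iff_arcs_meet:
  assumes "0 < tw R1" "0 < tw R2"
  shows "sees_horiz W H R1 R2 \<longleftrightarrow> arcs_meet H (ty R1) (th R1) (ty R2) (th R2)"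
proof -
  have "in_open_arc W (tx R) (tw R) (tx R + tw R / 2)" if "0 < tw R" for R
    unfolding in_open_arc_def using that by (auto intro!: exI[of _ 0])
  then show ?thesis
    unfolding sees_horiz_def arcs_meet_def trect_interior_def using assms by blast
qed

lemma sum_card_le_by_charging:
  assumes "\<And>i j. i < p \<Longrightarrow> j < q \<Longrightarrow> P i j \<Longrightarrow> A i j \<or> B i j"
    and "\<And>i j j'. i < p \<Longrightarrow> j < q \<Longrightarrow> j' < q \<Longrightarrow> A i j \<Longrightarrow> A i j' \<Longrightarrow> j = j'"
    and "\<And>i i' j. i < p \<Longrightarrow> i' < p \<Longrightarrow> j < q \<Longrightarrow> B i j \<Longrightarrow> B i' j \<Longrightarrow> i = i'"
  shows "(\<Sum>i<p. card {j. j < q \<and> P i j}) \<le> p + q"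
proof -
  let ?pairs = "\<lambda>R. SIGMA i:{..<p}. {j. j < q \<and> R i j}"
  have "(\<Sum>i<p. card {j. j < q \<and> P i j}) = card (?pairs P)"
    by (simp add: card_SigmaI)
  also have "\<dots> \<le> card (?pairs A \<union> ?pairs B)"
    using assms(1) by (intro card_mono) auto
  also have "\<dots> \<le> card (?pairs A) + card (?pairs B)"
    by (rule card_Un_le)
  also have "card (?pairs A) \<le> card {..<p}"
    using assms(2) by (intro card_inj_on_le[of fst]) (auto simp: inj_on_def)
  also have "card (?pairs B) \<le> card {..<q}"
    using assms(3) by (intro card_inj_on_le[of snd]) (auto simp: inj_on_def)
  finally show ?thesis
    by simp
qed

lemma sum_card_meeting_arcs_le:
  assumes "\<And>i i'. i < p \<Longrightarrow> i' < p \<Longrightarrow> i \<noteq> i' \<Longrightarrow> \<not> arcs_meet L (a i) (l i) (a i') (l i')"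
    and "\<And>j j'. j < q \<Longrightarrow> j' < q \<Longrightarrow> j \<noteq> j' \<Longrightarrow> \<not> arcs_meet L (b j) (m j) (b j') (m j')"
  shows "(\<Sum>i<p. card {j. j < q \<and> arcs_meet L (a i) (l i) (b j) (m j)}) \<le> p + q"
  using arcs_meet_imp_endpoint_in_halfopen_arc
proof (rule sum_card_le_by_charging)
  show "j = j'" if "j < q" "j' < q" "in_halfopen_arc L (b j) (m j) (a i + l i)"
    "in_halfopen_arc L (b j') (m j') (a i + l i)" for i j j'
    using that assms(2) in_halfopen_arcs_imp_arcs_meet by blast
  show "i = i'" if "i < p" "i' < p" "in_halfopen_arc L (a i) (l i) (b j + m j)"
    "in_halfopen_arc L (a i') (l i') (b j + m j)" for i i' j
    using that assms(1) in_halfopen_arcs_imp_arcs_meet by blast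
qed

lemma trvg_rep_tw_pos:
  assumes "trvg_rep W H V E rep" "v \<in> V"
  shows "0 < tw (rep v)"
  using assms unfolding trvg_rep_def valid_trect_def by blast

lemma trvg_rep_independent_arcs_disjoint:
  assumes rep: "trvg_rep W H V E rep"
    and f: "f ` {..<n} \<subseteq> V" "inj_on f {..<n}" "\<forall>i<n. \<forall>j<n. \<not> E (f i) (f j)"
    and i: "i < n" "i' < n" "i \<noteq> i'"
  shows "\<not> arcs_meet H (ty (rep (f i))) (th (rep (f i))) (ty (rep (f i'))) (th (rep (f i')))"
proof -
  have in_V: "f i \<in> V" "f i' \<in> V"
    using f(1) i by auto
  moreover have "f i \<noteq> f i'"
    using f(2) i by (auto simp: inj_on_def)
  ultimately have "\<not> sees_horiz W H (rep (f i)) (rep (f i'))"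
    using rep f(3) i unfolding trvg_rep_def by blast
  then show ?thesis
    using sees_horiz_iff_arcs_meet trvg_rep_tw_pos[OF rep] in_V by blast
qed

theorem lemma3:
  fixes W H :: real
    and V :: "'v set" and E :: "'v \<Rightarrow> 'v \<Rightarrow> bool" and rep :: "'v \<Rightarrow> trect"
    and g r :: "nat \<Rightarrow> 'v" and p q :: nat
  assumes "0 < W" and "0 < H"
    and "simple_graph V E"
    and "trvg_rep W H V E rep"
    and "V = g ` {..<p} \<union> r ` {..<q}"
    and "inj_on g {..<p}" and "inj_on r {..<q}"
    and "g ` {..<p} \<inter> r ` {..<q} = {}"
    and "\<forall>i<p. \<forall>j<p. \<not> E (g i) (g j)"
    and "\<forall>i<q. \<forall>j<q. \<not> E (r i) (r j)"
  shows "int q \<ge> (\<Sum>i<p. int (card {j. j < q \<and> sees_horiz W H (rep (g i)) (rep (r j))})) - int p"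
proof -
  have g_in_V: "g ` {..<p} \<subseteq> V" and r_in_V: "r ` {..<q} \<subseteq> V"
    using assms(5) by auto
  have sees_iff_meet: "sees_horiz W H (rep (g i)) (rep (r j))
      \<longleftrightarrow> arcs_meet H (ty (rep (g i))) (th (rep (g i))) (ty (rep (r j))) (th (rep (r j)))"
    if "i < p" "j < q" for i j
    using that g_in_V r_in_V by (intro sees_horiz_iff_arcs_meet trvg_rep_tw_pos[OF assms(4)]) auto
  have "(\<Sum>i<p. card {j. j < q \<and> sees_horiz W H (rep (g i)) (rep (r j))})
      = (\<Sum>i<p. card {j. j < q \<and> arcs_meet H (ty (rep (g i))) (th (rep (g i))) (ty (rep (r j))) (th (rep (r j)))})"
    by (rule sum.cong[OF refl], rule arg_cong[where f = card]) (auto simp: sees_iff_meet)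
  also have "\<dots> \<le> p + q"
    using trvg_rep_independent_arcs_disjoint[OF assms(4) g_in_V assms(6,9)]
      trvg_rep_independent_arcs_disjoint[OF assms(4) r_in_V assms(7,10)]
    by (rule sum_card_meeting_arcs_le)
  finally show ?thesis
    by (simp only: of_nat_sum[symmetric])
qed

end
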